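(* With the notation below, every real-valued $f\in\mathcal K(C_p)$ admits a decomposition $f(\lambda)=\sum_i\Theta_{h_i,\mu_i}(\lambda)-\sum_j\Theta_{h'_j,\mu'_j}(\lambda)-h\lambda+c$ with finitely many $(h_i,\mu_i),(h'_j,\mu'_j)\in H_p^+\times\mathbb{R}_+^*$, $c\in\mathbb{R}$, $h\in H_p$, where $(p-1)h=\sum_ih_i-\sum_jh'_j$, $h_i\leq\mu_i<ph_i$ and $h'_j\leq\mu'_j<ph'_j$.
   Context: Let $p$ be a prime, $H_p=\mathbb{Z}[1/p]$, $H_p^+=H_p\cap(0,\infty)$. $\mathcal K(C_p)$ is the set of continuous piecewise affine functions $f:(0,\infty)\to\mathbb{R}$ (finitely many breakpoints on compact subintervals) with slopes in $H_p$ and $f(p\lambda)=f(\lambda)$, together with the constant $-\infty$. Let $\theta(\lambda)=\sum_{m\geq0}\max(0,1-p^m\lambda)+\sum_{m\geq1}\max(0,p^{-m}\lambda-1)$ for $\lambda>0$, and $\Theta_{h,\mu}(\lambda)=\mu\,\theta(\mu^{-1}h\lambda)$ for $h\in H_p^+$, $\mu>0$. *)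

theory Defs
  imports "HOL-Analysis.Analysis"
begin

definition Hp :: "nat \<Rightarrow> real set" where
  "Hp p = {x. \<exists>k::int. \<exists>n::nat. x = real_of_int k / (real p) ^ n}"

definition Hp_pos :: "nat \<Rightarrow> real set" where
  "Hp_pos p = Hp p \<inter> {0<..}"

definition pw_affine_Hp :: "nat \<Rightarrow> (real \<Rightarrow> real) \<Rightarrow> bool" where
  "pw_affine_Hp p f \<longleftrightarrow>
     continuous_on {0<..} f \<and>
     (\<forall>a b. 0 < a \<and> a < b \<longrightarrow>
        (\<exists>T. finite T \<and> a \<in> T \<and> b \<in> T \<and> T \<subseteq> {a..b} \<and>
          (\<forall>s t. s \<in> T \<and> t \<in> T \<and> s < t \<and> {s<..<t} \<inter> T = {} \<longrightarrow>
             (\<exists>m \<in> Hp p. \<exists>c. \<forall>x \<in> {s..t}. f x = m * x + c))))"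

text \<open>Real-valued elements of K(C_p) (the constant -oo is excluded).\<close>
definition K_Cp :: "nat \<Rightarrow> (real \<Rightarrow> real) set" where
  "K_Cp p = {f. pw_affine_Hp p f \<and> (\<forall>lam::real. lam > 0 \<longrightarrow> f (real p * lam) = f lam)}"

definition theta :: "nat \<Rightarrow> real \<Rightarrow> real" where
  "theta p lam = (\<Sum>m. max 0 (1 - (real p) ^ m * lam))
              + (\<Sum>m. max 0 (lam / (real p) ^ (Suc m) - 1))"

definition Theta :: "nat \<Rightarrow> real \<Rightarrow> real \<Rightarrow> real \<Rightarrow> real" where
  "Theta p h \<mu> lam = \<mu> * theta p (h * lam / \<mu>)"

end

theory Submission
  imports Defs
begin

text \<open>On the fundamental domain \<open>[1, p]\<close> a function \<open>f \<in> K(C\<^sub>p)\<close> is \<open>C + L x\<close> plus a finite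
  combination \<open>\<Sum> s max(0, t - x)\<close> of hinges with \<open>1 \<le> t < p\<close>, and on \<open>[1, p]\<close> each hinge equals
  \<open>t \<theta>(x / t)\<close>. An extra hinge at \<open>t = 1\<close>, invisible on \<open>[1, p]\<close>, makes \<open>\<Sum> s = -L (p - 1)\<close>; then
  \<open>f 1 = f p\<close> forces \<open>\<Sum> s t = 0\<close>, and by \<open>\<theta>(p x) = \<theta>(x) + x - 1\<close> these two identities make
  \<open>\<Sum> s t \<theta>(x / t) + L x\<close> invariant under \<open>x \<mapsto> p x\<close>, like \<open>f\<close>. A dilation invariant function is
  determined by its values on \<open>[1, p]\<close>, so \<open>f = \<Sum> s t \<theta>(x / t) + L x + C\<close> on \<open>(0, \<infinity>)\<close>, and
  \<open>s t \<theta>(x / t) = \<plusminus>\<Theta>\<^bsub>\<bar>s\<bar>,\<bar>s\<bar> t\<^esub>(x)\<close>.\<close>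

lemma Hp_of_int [simp]: "real_of_int k \<in> Hp p"
proof -
  have "real_of_int k = real_of_int k / real p ^ 0" by simp
  then show ?thesis unfolding Hp_def by blast
qed

lemma Hp_of_nat [simp]: "real n \<in> Hp p"
  using Hp_of_int[of "int n" p] by simp

lemma Hp_add:
  assumes "x \<in> Hp p" "y \<in> Hp p" "p > 0"
  shows "x + y \<in> Hp p"
proof -
  obtain k1 n1 k2 n2 where x: "x = real_of_int k1 / real p ^ n1" and y: "y = real_of_int k2 / real p ^ n2"
    using assms(1,2) unfolding Hp_def by blast
  have "x + y = real_of_int (k1 * int p ^ n2 + k2 * int p ^ n1) / real p ^ (n1 + n2)"
    using \<open>p > 0\<close> by (simp add: x y field_simps power_add)
  then show ?thesis unfolding Hp_def by blast
qed

lemma Hp_uminus: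
  assumes "x \<in> Hp p"
  shows "- x \<in> Hp p"
proof -
  obtain k n where "x = real_of_int k / real p ^ n" using assms unfolding Hp_def by blast
  then have "- x = real_of_int (- k) / real p ^ n" by simp
  then show ?thesis unfolding Hp_def by blast
qed

lemma Hp_diff: "x \<in> Hp p \<Longrightarrow> y \<in> Hp p \<Longrightarrow> p > 0 \<Longrightarrow> x - y \<in> Hp p"
  using Hp_add[of x p "- y"] Hp_uminus[of y p] by simp

lemma Hp_mult:
  assumes "x \<in> Hp p" "y \<in> Hp p"
  shows "x * y \<in> Hp p"
proof -
  obtain k1 n1 k2 n2 where x: "x = real_of_int k1 / real p ^ n1" and y: "y = real_of_int k2 / real p ^ n2"
    using assms unfolding Hp_def by blast
  have "x * y = real_of_int (k1 * k2) / real p ^ (n1 + n2)"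
    by (simp add: x y power_add)
  then show ?thesis unfolding Hp_def by blast
qed

lemma Hp_sum_list: "p > 0 \<Longrightarrow> (\<And>z. z \<in> set xs \<Longrightarrow> g z \<in> Hp p) \<Longrightarrow> (\<Sum>z \<leftarrow> xs. g z) \<in> Hp p"
  by (induction xs) (auto intro: Hp_add Hp_of_int[of 0, simplified])

lemma summable_max_0_one_minus_power:
  fixes b x :: real
  assumes "b > 1" "x > 0"
  shows "summable (\<lambda>m. max 0 (1 - b ^ m * x))"
proof -
  obtain N where N: "1 / x < b ^ N" using real_arch_pow[OF \<open>b > 1\<close>] by blast
  have "max 0 (1 - b ^ m * x) = 0" if "m \<notin> {..<N}" for m
  proof -
    have "b ^ N \<le> b ^ m" using that \<open>b > 1\<close> by (intro power_increasing) auto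
    then have "b ^ N * x \<le> b ^ m * x" using \<open>x > 0\<close> by simp
    moreover have "1 < b ^ N * x" using N \<open>x > 0\<close> by (simp add: field_simps)
    ultimately have "1 < b ^ m * x" by linarith
    then show ?thesis by simp
  qed
  then show ?thesis by (intro summable_finite[of "{..<N}"]) auto
qed

lemma summable_max_0_div_power_minus_one:
  fixes b x :: real
  assumes "b > 1"
  shows "summable (\<lambda>m. max 0 (x / b ^ m - 1))"
proof -
  obtain N where N: "x < b ^ N" using real_arch_pow[OF \<open>b > 1\<close>] by blast
  have "max 0 (x / b ^ m - 1) = 0" if "m \<notin> {..<N}" for m
  proof -
    have "b ^ N \<le> b ^ m" using that \<open>b > 1\<close> by (intro power_increasing) auto
    with N have "x < b ^ m" by linarith
    with \<open>b > 1\<close> have "x / b ^ m < 1" by simp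
    then show ?thesis by simp
  qed
  then show ?thesis by (intro summable_finite[of "{..<N}"]) auto
qed

lemma theta_mult_p:
  assumes "2 \<le> p" "x > 0"
  shows "theta p (real p * x) = theta p x + x - 1"
proof -
  define u where "u m = max 0 (1 - real p ^ m * x)" for m
  define v where "v m = max 0 (x / real p ^ m - 1)" for m
  have "p \<noteq> 0" "1 < real p" using \<open>2 \<le> p\<close> by simp_all
  have u: "summable u" unfolding u_def
    using summable_max_0_one_minus_power[OF \<open>1 < real p\<close> \<open>x > 0\<close>] .
  have v: "summable v" unfolding v_def
    using summable_max_0_div_power_minus_one[OF \<open>1 < real p\<close>] .
  have "theta p (real p * x) = (\<Sum>m. u (Suc m)) + (\<Sum>m. v m)"
    unfolding theta_def u_def v_def using \<open>p \<noteq> 0\<close> by (simp add: algebra_simps)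
  also have "\<dots> = (\<Sum>m. u m) - u 0 + ((\<Sum>m. v (Suc m)) + v 0)"
    using suminf_split_head[OF u] suminf_split_head[OF v] by simp
  also have "\<dots> = theta p x + x - 1"
    unfolding theta_def u_def v_def by simp
  finally show ?thesis .
qed

lemma theta_eq_0:
  assumes "1 \<le> x" "x \<le> real p"
  shows "theta p x = 0"
proof -
  have "max 0 (1 - real p ^ m * x) = 0" for m
  proof -
    have "1 \<le> real p ^ m" using assms by simp
    then show ?thesis using assms mult_mono[of 1 "real p ^ m" 1 x] by simp
  qed
  moreover have "max 0 (x / real p ^ Suc m - 1) = 0" for m
  proof -
    have "real p \<le> real p ^ Suc m" using assms by (simp add: power_increasing[of 1, simplified])
    then have "x \<le> real p ^ Suc m" using assms by linarith
    then have "x / real p ^ Suc m \<le> 1" using assms by (simp del: power_Suc)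
    then show ?thesis by simp
  qed
  ultimately show ?thesis unfolding theta_def by simp
qed

text \<open>One of \<open>x / t\<close> and \<open>p x / t\<close> lies in \<open>[1, p]\<close>, where \<open>\<theta>\<close> vanishes.\<close>
lemma scaled_theta_eq_hinge:
  assumes "2 \<le> p" "1 \<le> t" "t \<le> real p" "1 \<le> x" "x \<le> real p"
  shows "t * theta p (x / t) = max 0 (t - x)"
proof (cases "t \<le> x")
  case True
  have "real p \<le> t * real p" using assms mult_right_mono[of 1 t "real p"] by simp
  then have "x \<le> t * real p" using assms by linarith
  then have "theta p (x / t) = 0" using True assms by (intro theta_eq_0) (auto simp: field_simps)
  then show ?thesis using True by simp
next
  case False
  have "real p \<le> x * real p" using assms mult_right_mono[of 1 x "real p"] by simp
  then have "t \<le> x * real p" using assms by linarith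
  then have "theta p (real p * (x / t)) = 0" using False assms by (intro theta_eq_0) (auto simp: field_simps)
  with theta_mult_p[of p "x / t"] assms have "theta p (x / t) = 1 - x / t" by simp
  then show ?thesis using False assms by (simp add: field_simps)
qed

lemma Theta_mult_right: "h \<noteq> 0 \<Longrightarrow> Theta p h (h * t) x = h * t * theta p (x / t)"
  unfolding Theta_def by simp

definition hinge_sum :: "(real \<times> real) list \<Rightarrow> real \<Rightarrow> real" where
  "hinge_sum S x = (\<Sum>(s, t) \<leftarrow> S. s * max 0 (t - x))"

lemma hinge_sum_Nil [simp]: "hinge_sum [] x = 0"
  and hinge_sum_Cons [simp]: "hinge_sum ((s, t) # S) x = s * max 0 (t - x) + hinge_sum S x"
  unfolding hinge_sum_def by simp_all

lemma hinge_sum_eq_0: "(\<And>s t. (s, t) \<in> set S \<Longrightarrow> t \<le> x) \<Longrightarrow> hinge_sum S x = 0"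
  by (induction S) fastforce+

lemma hinge_sum_eq_affine:
  "(\<And>s t. (s, t) \<in> set S \<Longrightarrow> x \<le> t) \<Longrightarrow>
     hinge_sum S x = (\<Sum>(s, t) \<leftarrow> S. s * t) - x * (\<Sum>(s, t) \<leftarrow> S. s)"
  by (induction S) (fastforce simp: algebra_simps)+

lemma hinge_sum_extend:
  assumes rep: "\<And>x. x \<in> {a..t} \<Longrightarrow> f x = C + L * x + hinge_sum S x"
    and S: "\<And>s u. (s, u) \<in> set S \<Longrightarrow> u \<le> t" and "a \<le> t"
    and aff: "\<And>x. x \<in> {t..b} \<Longrightarrow> f x = m * x + c"
    and x: "x \<in> {a..b}"
  shows "f x = (C - (m - L) * t) + m * x + hinge_sum ((m - L, t) # S) x"
proof (cases "x \<le> t")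
  case True
  then show ?thesis using rep x by (simp add: algebra_simps)
next
  case False
  have "hinge_sum S x = 0" "hinge_sum S t = 0"
    by (rule hinge_sum_eq_0, use S False in force)+
  moreover have "f t = C + L * t" "f t = m * t + c" "f x = m * x + c"
    using rep[of t] aff[of t] aff[of x] \<open>hinge_sum S t = 0\<close> \<open>a \<le> t\<close> False x by auto
  ultimately show ?thesis using False by (simp add: algebra_simps)
qed

lemma piecewise_affine_eq_hinge_sum:
  fixes M T :: "real set"
  assumes "finite T" "a \<in> T" "\<And>x. x \<in> T \<Longrightarrow> a \<le> x"
    and M: "0 \<in> M" "\<And>u v. u \<in> M \<Longrightarrow> v \<in> M \<Longrightarrow> u - v \<in> M"
    and "\<And>s t. s \<in> T \<Longrightarrow> t \<in> T \<Longrightarrow> s < t \<Longrightarrow> {s<..<t} \<inter> T = {} \<Longrightarrow>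
           \<exists>m \<in> M. \<exists>c. \<forall>x \<in> {s..t}. f x = m * x + c"
  shows "\<exists>C L S. L \<in> M \<and> (\<forall>(s, t) \<in> set S. s \<in> M \<and> a \<le> t \<and> t < Max T) \<and>
           (\<forall>x \<in> {a..Max T}. f x = C + L * x + hinge_sum S x)"
  using assms(1-3,6)
proof (induction T rule: finite_linorder_max_induct)
  case empty
  then show ?case by simp
next
  case (insert b A)
  show ?case
  proof (cases "A = {}")
    case True
    then have "a = b" using insert.prems by simp
    then show ?thesis using True \<open>0 \<in> M\<close> by (intro exI[of _ "f a"] exI[of _ 0] exI[of _ "[]"]) auto
  next
    case False
    define t where "t = Max A"
    have "t \<in> A" "t < b" using False insert.hyps by (auto simp: t_def)
    have Max_b: "Max (insert b A) = b" using False insert.hyps by (auto intro: Max_eqI)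
    have "a \<noteq> b" using False insert.hyps insert.prems(2) by force
    then have "a \<in> A" using insert.prems(1) by simp
    have gaps_A: "\<exists>m \<in> M. \<exists>c. \<forall>x \<in> {s..u}. f x = m * x + c"
      if "s \<in> A" "u \<in> A" "s < u" "{s<..<u} \<inter> A = {}" for s u
      using that insert.hyps insert.prems(3)[of s u] by auto
    obtain C L S where L: "L \<in> M" and S: "\<forall>(s, u) \<in> set S. s \<in> M \<and> a \<le> u \<and> u < t"
      and rep: "\<forall>x \<in> {a..t}. f x = C + L * x + hinge_sum S x"
      using insert.IH[OF \<open>a \<in> A\<close> _ gaps_A] insert.prems(2) unfolding t_def by blast
    have "{t<..<b} \<inter> insert b A = {}" using insert.hyps Max_ge[of A] by (fastforce simp: t_def)
    then obtain m c where "m \<in> M" and aff: "\<forall>x \<in> {t..b}. f x = m * x + c"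
      using insert.prems(3)[of t b] \<open>t \<in> A\<close> \<open>t < b\<close> by blast
    have "a \<le> t" using \<open>a \<in> A\<close> insert.hyps by (simp add: t_def)
    have "f x = (C - (m - L) * t) + m * x + hinge_sum ((m - L, t) # S) x" if "x \<in> {a..b}" for x
      using hinge_sum_extend[of a t f C L S b m c x] rep S \<open>a \<le> t\<close> aff that by fastforce
    moreover have "\<forall>(s, u) \<in> set ((m - L, t) # S). s \<in> M \<and> a \<le> u \<and> u < b"
      using S M(2)[OF \<open>m \<in> M\<close> L] \<open>a \<le> t\<close> \<open>t < b\<close> by auto
    ultimately show ?thesis using \<open>m \<in> M\<close> unfolding Max_b by blast
  qed
qed

definition theta_sum :: "nat \<Rightarrow> (real \<times> real) list \<Rightarrow> real \<Rightarrow> real" where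
  "theta_sum p S x = (\<Sum>(s, t) \<leftarrow> S. s * t * theta p (x / t))"

lemma theta_sum_Nil [simp]: "theta_sum p [] x = 0"
  and theta_sum_Cons [simp]: "theta_sum p ((s, t) # S) x = s * t * theta p (x / t) + theta_sum p S x"
  unfolding theta_sum_def by simp_all

lemma theta_sum_mult_p:
  assumes "2 \<le> p" "x > 0" "\<And>s t. (s, t) \<in> set S \<Longrightarrow> t > 0"
  shows "theta_sum p S (real p * x) =
           theta_sum p S x + x * (\<Sum>(s, t) \<leftarrow> S. s) - (\<Sum>(s, t) \<leftarrow> S. s * t)"
  using assms(3)
proof (induction S)
  case Nil
  then show ?case by simp
next
  case (Cons st S)
  obtain s t where st: "st = (s, t)" by fastforce
  have "t > 0" using Cons.prems st by auto
  have "theta p (real p * x / t) = theta p (x / t) + x / t - 1"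
    using theta_mult_p[OF \<open>2 \<le> p\<close>, of "x / t"] \<open>x > 0\<close> \<open>t > 0\<close> by simp
  then have "t * theta p (real p * x / t) = t * theta p (x / t) + x - t"
    using \<open>t > 0\<close> by (simp add: field_simps)
  then have "s * (t * theta p (real p * x / t)) = s * (t * theta p (x / t) + x - t)"
    by simp
  then have "s * t * theta p (real p * x / t) = s * t * theta p (x / t) + x * s - s * t"
    by (simp add: algebra_simps)
  moreover have "theta_sum p S (real p * x) =
      theta_sum p S x + x * (\<Sum>(s, t) \<leftarrow> S. s) - (\<Sum>(s, t) \<leftarrow> S. s * t)"
    by (rule Cons.IH, rule Cons.prems) auto
  ultimately show ?case using st by (simp add: algebra_simps)
qed

lemma theta_sum_eq_hinge_sum:
  assumes "2 \<le> p" "1 \<le> x" "x \<le> real p" "\<And>s t. (s, t) \<in> set S \<Longrightarrow> 1 \<le> t \<and> t \<le> real p"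
  shows "theta_sum p S x = hinge_sum S x"
  using assms(4)
proof (induction S)
  case Nil
  then show ?case by simp
next
  case (Cons st S)
  obtain s t where st: "st = (s, t)" by fastforce
  then have "t * theta p (x / t) = max 0 (t - x)"
    using Cons.prems assms(1-3) by (intro scaled_theta_eq_hinge) auto
  moreover have "theta_sum p S x = hinge_sum S x"
    by (rule Cons.IH, rule Cons.prems) auto
  ultimately show ?case using st by (simp add: mult.assoc)
qed

definition Theta_params :: "(real \<Rightarrow> bool) \<Rightarrow> (real \<times> real) list \<Rightarrow> (real \<times> real) list" where
  "Theta_params P S = map (\<lambda>(s, t). (\<bar>s\<bar>, \<bar>s\<bar> * t)) (filter (\<lambda>(s, t). P s) S)"

lemma Theta_params_Nil [simp]: "Theta_params P [] = []"
  and Theta_params_Cons [simp]: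
    "Theta_params P ((s, t) # S) = (if P s then (\<bar>s\<bar>, \<bar>s\<bar> * t) # Theta_params P S else Theta_params P S)"
  unfolding Theta_params_def by simp_all

lemma Theta_params_sum_fst:
  "(\<Sum>(h, \<mu>) \<leftarrow> Theta_params (\<lambda>s. s > 0) S. h) - (\<Sum>(h, \<mu>) \<leftarrow> Theta_params (\<lambda>s. s < 0) S. h)
     = (\<Sum>(s, t) \<leftarrow> S. s)"
  by (induction S) auto

lemma Theta_params_sum_Theta:
  "(\<Sum>(h, \<mu>) \<leftarrow> Theta_params (\<lambda>s. s > 0) S. Theta p h \<mu> x)
     - (\<Sum>(h, \<mu>) \<leftarrow> Theta_params (\<lambda>s. s < 0) S. Theta p h \<mu> x) = theta_sum p S x"
proof (induction S)
  case Nil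
  then show ?case by simp
next
  case (Cons st S)
  obtain s t where st: "st = (s, t)" by fastforce
  have "s \<noteq> 0 \<Longrightarrow> Theta p \<bar>s\<bar> (\<bar>s\<bar> * t) x = \<bar>s\<bar> * t * theta p (x / t)"
    by (simp add: Theta_mult_right)
  then show ?case using Cons st by (cases "s > 0"; cases "s < 0") auto
qed

lemma Theta_params_bounds:
  assumes "\<And>s. P s \<Longrightarrow> s \<noteq> 0"
    and "set S \<subseteq> Hp p \<times> {1..<real p}"
  shows "\<forall>(h, \<mu>) \<in> set (Theta_params P S). h \<in> Hp_pos p \<and> \<mu> > 0 \<and> h \<le> \<mu> \<and> \<mu> < real p * h"
proof clarify
  fix h \<mu> assume "(h, \<mu>) \<in> set (Theta_params P S)"
  then obtain s t where st: "(s, t) \<in> set S" "P s" and h: "h = \<bar>s\<bar>" and \<mu>: "\<mu> = \<bar>s\<bar> * t"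
    unfolding Theta_params_def by auto
  then have s: "s \<in> Hp p" "s \<noteq> 0" and t: "1 \<le> t" "t < real p" using assms by auto
  have "\<bar>s\<bar> \<in> Hp p" using s Hp_uminus[of s p] by (cases "s \<ge> 0") auto
  moreover have "\<bar>s\<bar> \<le> \<bar>s\<bar> * t" "\<bar>s\<bar> * t < real p * \<bar>s\<bar>" using s t by simp_all
  ultimately show "h \<in> Hp_pos p \<and> \<mu> > 0 \<and> h \<le> \<mu> \<and> \<mu> < real p * h"
    unfolding Hp_pos_def h \<mu> using s t by auto
qed

lemma theta_sum_eq_Theta_sums:
  assumes "set S \<subseteq> Hp p \<times> {1..<real p}"
  obtains A B where
    "\<forall>(h, \<mu>) \<in> set A. h \<in> Hp_pos p \<and> \<mu> > 0 \<and> h \<le> \<mu> \<and> \<mu> < real p * h"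
    "\<forall>(h, \<mu>) \<in> set B. h \<in> Hp_pos p \<and> \<mu> > 0 \<and> h \<le> \<mu> \<and> \<mu> < real p * h"
    "(\<Sum>(h, \<mu>) \<leftarrow> A. h) - (\<Sum>(h, \<mu>) \<leftarrow> B. h) = (\<Sum>(s, t) \<leftarrow> S. s)"
    "\<And>x. (\<Sum>(h, \<mu>) \<leftarrow> A. Theta p h \<mu> x) - (\<Sum>(h, \<mu>) \<leftarrow> B. Theta p h \<mu> x) = theta_sum p S x"
proof (rule that[of "Theta_params (\<lambda>s. s > 0) S" "Theta_params (\<lambda>s. s < 0) S"])
  show "\<forall>(h, \<mu>) \<in> set (Theta_params (\<lambda>s. s > 0) S). h \<in> Hp_pos p \<and> \<mu> > 0 \<and> h \<le> \<mu> \<and> \<mu> < real p * h"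
    "\<forall>(h, \<mu>) \<in> set (Theta_params (\<lambda>s. s < 0) S). h \<in> Hp_pos p \<and> \<mu> > 0 \<and> h \<le> \<mu> \<and> \<mu> < real p * h"
    by (rule Theta_params_bounds[OF _ assms]; simp)+
qed (rule Theta_params_sum_fst Theta_params_sum_Theta)+

lemma dilation_invariant_eq_0:
  fixes D :: "real \<Rightarrow> real" and b :: real
  assumes "b > 1" and inv: "\<And>x. x > 0 \<Longrightarrow> D (b * x) = D x"
    and zero: "\<And>x. 1 \<le> x \<Longrightarrow> x \<le> b \<Longrightarrow> D x = 0" and "x > 0"
  shows "D x = 0"
proof -
  have inv_power: "D (b ^ n * y) = D y" if "y > 0" for n y
    using that \<open>b > 1\<close> by (induction n) (auto simp: mult.assoc inv)
  define k where "k = \<lfloor>log b x\<rfloor>"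
  define y where "y = x / b powr k"
  have "b powr k \<le> x" "x < b powr (k + 1)"
    using floor_log_eq_powr_iff[OF \<open>x > 0\<close> \<open>b > 1\<close>] k_def by auto
  then have "1 \<le> y" "y \<le> b" "y > 0" using \<open>b > 1\<close> \<open>x > 0\<close> by (auto simp: y_def powr_add field_simps)
  then have "D y = 0" using zero by simp
  show ?thesis
  proof (cases "k \<ge> 0")
    case True
    then have "x = b ^ nat k * y" using \<open>b > 1\<close> by (simp add: y_def powr_realpow[symmetric])
    then show ?thesis using inv_power \<open>y > 0\<close> \<open>D y = 0\<close> by simp
  next
    case False
    then have "y = b ^ nat (- k) * x" using \<open>b > 1\<close>
      by (simp add: y_def powr_realpow[symmetric] powr_minus divide_inverse)
    then show ?thesis using inv_power \<open>x > 0\<close> \<open>D y = 0\<close> by simp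
  qed
qed

lemma K_Cp_eq_hinge_sum:
  assumes "2 \<le> p" "f \<in> K_Cp p"
  obtains L S C where "L \<in> Hp p"
    and "set S \<subseteq> Hp p \<times> {1..<real p}"
    and "(\<Sum>(s, t) \<leftarrow> S. s) = - L * (real p - 1)" "(\<Sum>(s, t) \<leftarrow> S. s * t) = 0"
    and "\<And>x. 1 \<le> x \<Longrightarrow> x \<le> real p \<Longrightarrow> f x = C + L * x + hinge_sum S x"
proof -
  have "p > 0" using \<open>2 \<le> p\<close> by simp
  from assms(2) have "pw_affine_Hp p f" and per: "f (real p) = f 1"
    unfolding K_Cp_def by (auto dest: spec[of _ 1])
  moreover have "0 < (1::real) \<and> 1 < real p" using \<open>2 \<le> p\<close> by simp
  ultimately obtain T where T: "finite T" "1 \<in> T" "real p \<in> T" "T \<subseteq> {1..real p}"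
    and aff: "\<forall>s t. s \<in> T \<and> t \<in> T \<and> s < t \<and> {s<..<t} \<inter> T = {} \<longrightarrow>
             (\<exists>m \<in> Hp p. \<exists>c. \<forall>x \<in> {s..t}. f x = m * x + c)"
    unfolding pw_affine_Hp_def by blast
  have "Max T = real p" using T by (intro Max_eqI) auto
  then obtain C L S0 where L: "L \<in> Hp p" and S0: "\<forall>(s, t) \<in> set S0. s \<in> Hp p \<and> 1 \<le> t \<and> t < real p"
    and rep: "\<forall>x \<in> {1..real p}. f x = C + L * x + hinge_sum S0 x"
    using piecewise_affine_eq_hinge_sum[of T 1 "Hp p" f] T aff Hp_diff[OF _ _ \<open>p > 0\<close>]
      Hp_of_int[of 0 p] by fastforce
  define s0 where "s0 = - L * (real p - 1) - (\<Sum>(s, t) \<leftarrow> S0. s)"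
  define S where "S = (s0, 1) # S0"
  have "s0 \<in> Hp p" unfolding s0_def using L S0 Hp_of_nat[of p p] Hp_of_nat[of 1 p]
    by (intro Hp_diff Hp_mult Hp_uminus Hp_sum_list \<open>p > 0\<close>) auto
  then have S: "set S \<subseteq> Hp p \<times> {1..<real p}"
    using S0 \<open>2 \<le> p\<close> by (auto simp: S_def)
  have sum_s: "(\<Sum>(s, t) \<leftarrow> S. s) = - L * (real p - 1)" by (simp add: S_def s0_def)
  have sum_st: "(\<Sum>(s, t) \<leftarrow> S. s * t) = 0"
  proof -
    have "f 1 = C + L + (\<Sum>(s, t) \<leftarrow> S0. s * t) - (\<Sum>(s, t) \<leftarrow> S0. s)"
      using rep hinge_sum_eq_affine[of S0 1] S0 \<open>2 \<le> p\<close> by fastforce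
    moreover have "f (real p) = C + L * real p"
      using rep hinge_sum_eq_0[of S0 "real p"] S0 \<open>2 \<le> p\<close> by fastforce
    ultimately show ?thesis using per by (simp add: S_def s0_def algebra_simps)
  qed
  have "f x = C + L * x + hinge_sum S x" if "1 \<le> x" "x \<le> real p" for x
    using rep that by (simp add: S_def)
  with L S sum_s sum_st show ?thesis by (rule that)
qed

lemma K_Cp_eq_theta_sum:
  assumes "2 \<le> p" "f \<in> K_Cp p"
  obtains L S C where "L \<in> Hp p"
    and "set S \<subseteq> Hp p \<times> {1..<real p}"
    and "(\<Sum>(s, t) \<leftarrow> S. s) = - L * (real p - 1)"
    and "\<And>x. x > 0 \<Longrightarrow> f x = theta_sum p S x + L * x + C"
proof -
  obtain L S C where L: "L \<in> Hp p" and S: "set S \<subseteq> Hp p \<times> {1..<real p}"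
    and sum_s: "(\<Sum>(s, t) \<leftarrow> S. s) = - L * (real p - 1)" and sum_st: "(\<Sum>(s, t) \<leftarrow> S. s * t) = 0"
    and rep: "\<And>x. 1 \<le> x \<Longrightarrow> x \<le> real p \<Longrightarrow> f x = C + L * x + hinge_sum S x"
    by (rule K_Cp_eq_hinge_sum[OF assms]) (rule that)
  define D where "D x = f x - (theta_sum p S x + L * x + C)" for x
  have per: "f (real p * x) = f x" if "x > 0" for x
    using assms(2) that unfolding K_Cp_def by blast
  have D_inv: "D (real p * x) = D x" if "x > 0" for x
  proof -
    have "\<And>s t. (s, t) \<in> set S \<Longrightarrow> t > 0" using S by fastforce
    then have "theta_sum p S (real p * x) =
        theta_sum p S x + x * (\<Sum>(s, t) \<leftarrow> S. s) - (\<Sum>(s, t) \<leftarrow> S. s * t)"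
      by (rule theta_sum_mult_p[OF \<open>2 \<le> p\<close> that])
    then have "theta_sum p S (real p * x) = theta_sum p S x - L * (real p - 1) * x"
      unfolding sum_s sum_st by (simp add: algebra_simps)
    then show ?thesis using per[OF that] by (simp add: D_def algebra_simps)
  qed
  have D_base: "D x = 0" if "1 \<le> x" "x \<le> real p" for x
  proof -
    have "theta_sum p S x = hinge_sum S x"
      using S by (intro theta_sum_eq_hinge_sum[OF \<open>2 \<le> p\<close> that]) fastforce
    then show ?thesis using rep[OF that] by (simp add: D_def)
  qed
  have "D x = 0" if "x > 0" for x
    by (rule dilation_invariant_eq_0[of "real p" D, OF _ D_inv D_base that]) (use \<open>2 \<le> p\<close> in simp)
  then have f_eq: "f x = theta_sum p S x + L * x + C" if "x > 0" for x
    using that by (simp add: D_def)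
  with L S sum_s show ?thesis by (rule that)
qed

theorem theorem5p12:
  fixes p :: nat and f :: "real \<Rightarrow> real"
  assumes "prime p"
    and "f \<in> K_Cp p"
  shows "\<exists>(A :: (real \<times> real) list) (B :: (real \<times> real) list) (h :: real) (c :: real).
           (\<forall>(hi, \<mu>i) \<in> set A. hi \<in> Hp_pos p \<and> \<mu>i > 0 \<and> hi \<le> \<mu>i \<and> \<mu>i < real p * hi) \<and>
           (\<forall>(hj, \<mu>j) \<in> set B. hj \<in> Hp_pos p \<and> \<mu>j > 0 \<and> hj \<le> \<mu>j \<and> \<mu>j < real p * hj) \<and>
           h \<in> Hp p \<and>
           (real p - 1) * h = (\<Sum>(hi, \<mu>i) \<leftarrow> A. hi) - (\<Sum>(hj, \<mu>j) \<leftarrow> B. hj) \<and>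
           (\<forall>lam::real. lam > 0 \<longrightarrow> f lam = (\<Sum>(hi, \<mu>i) \<leftarrow> A. Theta p hi \<mu>i lam)
                        - (\<Sum>(hj, \<mu>j) \<leftarrow> B. Theta p hj \<mu>j lam) - h * lam + c)"
proof -
  have "2 \<le> p" using \<open>prime p\<close> prime_ge_2_nat by blast
  obtain L S C where L: "L \<in> Hp p" and S: "set S \<subseteq> Hp p \<times> {1..<real p}"
    and sum_s: "(\<Sum>(s, t) \<leftarrow> S. s) = - L * (real p - 1)"
    and f_eq: "\<And>x. x > 0 \<Longrightarrow> f x = theta_sum p S x + L * x + C"
    by (rule K_Cp_eq_theta_sum[OF \<open>2 \<le> p\<close> assms(2)]) (rule that)
  obtain A B where
    "\<forall>(h, \<mu>) \<in> set A. h \<in> Hp_pos p \<and> \<mu> > 0 \<and> h \<le> \<mu> \<and> \<mu> < real p * h"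
    "\<forall>(h, \<mu>) \<in> set B. h \<in> Hp_pos p \<and> \<mu> > 0 \<and> h \<le> \<mu> \<and> \<mu> < real p * h"
    and sum_h: "(\<Sum>(h, \<mu>) \<leftarrow> A. h) - (\<Sum>(h, \<mu>) \<leftarrow> B. h) = (\<Sum>(s, t) \<leftarrow> S. s)"
    and sum_Theta: "\<And>x. (\<Sum>(h, \<mu>) \<leftarrow> A. Theta p h \<mu> x) - (\<Sum>(h, \<mu>) \<leftarrow> B. Theta p h \<mu> x) = theta_sum p S x"
    by (rule theta_sum_eq_Theta_sums[OF S]) (rule that)
  moreover have "(real p - 1) * - L = (\<Sum>(h, \<mu>) \<leftarrow> A. h) - (\<Sum>(h, \<mu>) \<leftarrow> B. h)"
    using sum_h sum_s by simp
  moreover have "f x = (\<Sum>(h, \<mu>) \<leftarrow> A. Theta p h \<mu> x) - (\<Sum>(h, \<mu>) \<leftarrow> B. Theta p h \<mu> x) - (- L) * x + C"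
    if "x > 0" for x
    using f_eq[OF that] sum_Theta[of x] by simp
  ultimately show ?thesis
    using Hp_uminus[OF L] by (intro exI[of _ A] exI[of _ B] exI[of _ "- L"] exI[of _ C]) auto
qed

end
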